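(* Let $G$ be a graph on $n$ vertices, let $k,s$ be positive integers, let $J$ be a $(k,k)$-bigraph, and let $X,Y\subseteq V(G)$ be such that $G[X]$ is $J$-free and $Y$ is $(k,s)$-unrestricted. Then $\min\{|X\setminus Y|,|X\cap Y|\}\le ks$.
   Context: Graphs are finite and simple. A $(k_1,k_2)$-bigraph is a triple $J=(H,A,B)$ with $H$ bipartite with bipartition $(A,B)$, $|A|=k_1$, $|B|=k_2$. An embedding of $J$ into a graph $G$ is an injection $\eta:A\cup B\to V(G)$ such that for all $u\in A$, $v\in B$: $uv\in E(H)$ iff $\eta(u)\eta(v)\in E(G)$; $G$ is $J$-free if no embedding exists. An ordered bigraph is a bigraph with $A$ and $B$ linearly ordered. For disjoint ordered sets $A=(a_1,\dots,a_{k_1})$, $B=(b_1,\dots,b_{k_2})$ of vertices of $G$, $(A,B)$ induces the ordered bigraph $J'$ if $a_ib_j\in E(G)$ exactly when the $i$-th vertex of the first side of $J'$ is adjacent to the $j$-th vertex of its second side. A $k$-base on a set $X$ is a collection of pairwise disjoint ordered $k$-element subsets of $X$. For a $k_1$-base $\mathcal{A}$ and a $k_2$-base $\mathcal{B}$ (on vertex sets of $G$), $(\mathcal{A},\mathcal{B})$ induces $J'$ if some $A\in\mathcal{A}$, $B\in\mathcal{B}$ induce $J'$, is $J'$-free otherwise, and is restricted if it is $J'$-free for some ordered $(k_1,k_2)$-bigraph $J'$. A set $Y\subseteq V(G)$ is $(k,s)$-restricted if there exist a $k$-base $\mathcal{A}$ on $Y$ and a $k$-base $\mathcal{B}$ on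 $V(G)\setminus Y$ with $|\mathcal{A}|,|\mathcal{B}|\ge s$ and $(\mathcal{A},\mathcal{B})$ restricted; otherwise $Y$ is $(k,s)$-unrestricted. *)

theory Defs
  imports Main
begin

definition is_graph :: "'a set \<Rightarrow> ('a \<Rightarrow> 'a \<Rightarrow> bool) \<Rightarrow> bool" where
  "is_graph V E \<longleftrightarrow> finite V \<and> (\<forall>u v. E u v \<longrightarrow> u \<in> V \<and> v \<in> V \<and> u \<noteq> v \<and> E v u)"

definition induced_edges :: "('a \<Rightarrow> 'a \<Rightarrow> bool) \<Rightarrow> 'a set \<Rightarrow> 'a \<Rightarrow> 'a \<Rightarrow> bool" where
  "induced_edges E X = (\<lambda>u v. E u v \<and> u \<in> X \<and> v \<in> X)"

definition is_bigraph :: "('b \<Rightarrow> 'b \<Rightarrow> bool) \<Rightarrow> 'b set \<Rightarrow> 'b set \<Rightarrow> nat \<Rightarrow> nat \<Rightarrow> bool" where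
  "is_bigraph H A B k1 k2 \<longleftrightarrow> is_graph (A \<union> B) H \<and> A \<inter> B = {} \<and> finite A \<and> finite B
     \<and> card A = k1 \<and> card B = k2
     \<and> (\<forall>u v. H u v \<longrightarrow> (u \<in> A \<and> v \<in> B) \<or> (u \<in> B \<and> v \<in> A))"

definition bigraph_embedding ::
  "('b \<Rightarrow> 'b \<Rightarrow> bool) \<Rightarrow> 'b set \<Rightarrow> 'b set \<Rightarrow> 'a set \<Rightarrow> ('a \<Rightarrow> 'a \<Rightarrow> bool) \<Rightarrow> ('b \<Rightarrow> 'a) \<Rightarrow> bool" where
  "bigraph_embedding H A B V E \<eta> \<longleftrightarrow> inj_on \<eta> (A \<union> B) \<and> \<eta> ` (A \<union> B) \<subseteq> V
     \<and> (\<forall>u\<in>A. \<forall>v\<in>B. H u v \<longleftrightarrow> E (\<eta> u) (\<eta> v))"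

definition bigraph_free ::
  "'a set \<Rightarrow> ('a \<Rightarrow> 'a \<Rightarrow> bool) \<Rightarrow> ('b \<Rightarrow> 'b \<Rightarrow> bool) \<Rightarrow> 'b set \<Rightarrow> 'b set \<Rightarrow> bool" where
  "bigraph_free V E H A B \<longleftrightarrow> \<not> (\<exists>\<eta>. bigraph_embedding H A B V E \<eta>)"

text \<open>An ordered (k1,k2)-bigraph is represented by its adjacency relation M on indices
  (i < k1 for the first side, j < k2 for the second side); ordered k-element sets are
  distinct lists of length k.\<close>
definition induces_ordered ::
  "('a \<Rightarrow> 'a \<Rightarrow> bool) \<Rightarrow> nat \<Rightarrow> nat \<Rightarrow> (nat \<Rightarrow> nat \<Rightarrow> bool) \<Rightarrow> 'a list \<Rightarrow> 'a list \<Rightarrow> bool" where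
  "induces_ordered E k1 k2 M as bs \<longleftrightarrow> set as \<inter> set bs = {}
     \<and> (\<forall>i<k1. \<forall>j<k2. E (as ! i) (bs ! j) \<longleftrightarrow> M i j)"

definition k_base :: "nat \<Rightarrow> 'a set \<Rightarrow> 'a list set \<Rightarrow> bool" where
  "k_base k X \<A> \<longleftrightarrow> (\<forall>L\<in>\<A>. distinct L \<and> length L = k \<and> set L \<subseteq> X)
     \<and> (\<forall>L1\<in>\<A>. \<forall>L2\<in>\<A>. L1 \<noteq> L2 \<longrightarrow> set L1 \<inter> set L2 = {})"

definition pair_induces ::
  "('a \<Rightarrow> 'a \<Rightarrow> bool) \<Rightarrow> nat \<Rightarrow> nat \<Rightarrow> (nat \<Rightarrow> nat \<Rightarrow> bool) \<Rightarrow> 'a list set \<Rightarrow> 'a list set \<Rightarrow> bool" where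
  "pair_induces E k1 k2 M \<A> \<B> \<longleftrightarrow> (\<exists>as\<in>\<A>. \<exists>bs\<in>\<B>. induces_ordered E k1 k2 M as bs)"

definition pair_restricted ::
  "('a \<Rightarrow> 'a \<Rightarrow> bool) \<Rightarrow> nat \<Rightarrow> nat \<Rightarrow> 'a list set \<Rightarrow> 'a list set \<Rightarrow> bool" where
  "pair_restricted E k1 k2 \<A> \<B> \<longleftrightarrow> (\<exists>M. \<not> pair_induces E k1 k2 M \<A> \<B>)"

definition ks_restricted :: "'a set \<Rightarrow> ('a \<Rightarrow> 'a \<Rightarrow> bool) \<Rightarrow> nat \<Rightarrow> nat \<Rightarrow> 'a set \<Rightarrow> bool" where
  "ks_restricted V E k s Y \<longleftrightarrow> (\<exists>\<A> \<B>. k_base k Y \<A> \<and> k_base k (V - Y) \<B>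
     \<and> card \<A> \<ge> s \<and> card \<B> \<ge> s \<and> pair_restricted E k k \<A> \<B>)"

definition ks_unrestricted :: "'a set \<Rightarrow> ('a \<Rightarrow> 'a \<Rightarrow> bool) \<Rightarrow> nat \<Rightarrow> nat \<Rightarrow> 'a set \<Rightarrow> bool" where
  "ks_unrestricted V E k s Y \<longleftrightarrow> \<not> ks_restricted V E k s Y"

end

(* If |X \<inter> Y| and |X - Y| both exceeded ks, we could pick s disjoint ordered k-sets in
   X \<inter> Y and s in X - Y; these are k-bases on Y and on V - Y. Numbering the sides of J turns
   J into an ordered bigraph, and since Y is unrestricted some pair of the bases induces it,
   which is an embedding of J into G[X]. *)
theory Submission
  imports Defs
begin

lemma k_base_mono:
  assumes "k_base k X \<A>" "X \<subseteq> Y"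
  shows "k_base k Y \<A>"
  using assms unfolding k_base_def by blast

lemma finite_k_base:
  assumes "k_base k X \<A>" "finite X"
  shows "finite \<A>"
proof (rule finite_subset)
  show "\<A> \<subseteq> {L. set L \<subseteq> X \<and> length L = k}"
    using assms(1) unfolding k_base_def by blast
  show "finite {L. set L \<subseteq> X \<and> length L = k}"
    using finite_lists_length_eq[OF assms(2)] by simp
qed

lemma k_base_insert:
  assumes "k_base k X \<A>" "distinct L" "length L = k" "set L \<subseteq> X"
    and "\<forall>L'\<in>\<A>. set L \<inter> set L' = {}"
  shows "k_base k X (insert L \<A>)"
  using assms unfolding k_base_def by blast

lemma k_base_exists:
  assumes "finite S" "k * s \<le> card S" "0 < k"
  shows "\<exists>\<A>. k_base k S \<A> \<and> card \<A> = s"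
  using assms(1,2)
proof (induction s arbitrary: S)
  case 0
  show ?case by (rule exI[of _ "{}"]) (simp add: k_base_def)
next
  case (Suc s)
  then have "k \<le> card S" by simp
  then obtain T where T: "T \<subseteq> S" "card T = k"
    by (metis obtain_subset_with_card_n)
  then have "finite T" using Suc.prems(1) finite_subset by blast
  then obtain L where L: "set L = T" "distinct L"
    using finite_distinct_list by metis
  have "length L = k" using L T(2) distinct_card by metis
  have "card (S - T) = card S - k" using T \<open>finite T\<close> by (simp add: card_Diff_subset)
  then have "k * s \<le> card (S - T)" using Suc.prems(2) by simp
  then obtain \<A> where \<A>: "k_base k (S - T) \<A>" "card \<A> = s"
    using Suc.IH Suc.prems(1) by blast
  have disjoint: "\<forall>L'\<in>\<A>. set L \<inter> set L' = {}"
    using \<A>(1) L(1) unfolding k_base_def by blast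
  have "k_base k S (insert L \<A>)"
    using k_base_insert[OF k_base_mono[OF \<A>(1)] L(2) \<open>length L = k\<close>] L(1) T(1) disjoint by blast
  moreover have "L \<notin> \<A>"
    using disjoint \<open>length L = k\<close> assms(3) by (metis Int_absorb length_0_conv set_empty2 neq0_conv)
  moreover have "finite \<A>" using finite_k_base \<A>(1) Suc.prems(1) by blast
  ultimately show ?case using \<A>(2) by auto
qed

lemma bigraph_embedding_induced:
  assumes "bigraph_embedding H A B W E \<eta>" "W \<subseteq> X"
  shows "bigraph_embedding H A B X (induced_edges E X) \<eta>"
  using assms unfolding bigraph_embedding_def induced_edges_def by blast

lemma induces_ordered_imp_bigraph_embedding:
  assumes fa: "bij_betw fa {..<k1} A" and fb: "bij_betw fb {..<k2} B" and "A \<inter> B = {}"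
    and as: "distinct as" "length as = k1" and bs: "distinct bs" "length bs = k2"
    and induces: "induces_ordered E k1 k2 (\<lambda>i j. H (fa i) (fb j)) as bs"
  shows "bigraph_embedding H A B (set as \<union> set bs) E
           (\<lambda>x. if x \<in> A then as ! inv_into {..<k1} fa x else bs ! inv_into {..<k2} fb x)"
    (is "bigraph_embedding H A B _ E ?\<eta>")
proof -
  have ga: "bij_betw ((!) as \<circ> inv_into {..<k1} fa) A (set as)"
    using bij_betw_trans[OF bij_betw_inv_into[OF fa] bij_betw_nth[OF as(1)]] as(2) by simp
  have gb: "bij_betw ((!) bs \<circ> inv_into {..<k2} fb) B (set bs)"
    using bij_betw_trans[OF bij_betw_inv_into[OF fb] bij_betw_nth[OF bs(1)]] bs(2) by simp
  have "bij_betw ?\<eta> (A \<union> B) (set as \<union> set bs)"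
    using bij_betw_disjoint_Un[OF ga gb \<open>A \<inter> B = {}\<close>] induces
    unfolding induces_ordered_def comp_apply by simp
  moreover have "H u v \<longleftrightarrow> E (?\<eta> u) (?\<eta> v)" if "u \<in> A" "v \<in> B" for u v
  proof -
    have "inv_into {..<k1} fa u < k1" "fa (inv_into {..<k1} fa u) = u"
      using that(1) fa by (auto simp: bij_betw_def inv_into_into f_inv_into_f)
    moreover have "inv_into {..<k2} fb v < k2" "fb (inv_into {..<k2} fb v) = v"
      using that(2) fb by (auto simp: bij_betw_def inv_into_into f_inv_into_f)
    ultimately show ?thesis
      using induces that \<open>A \<inter> B = {}\<close> unfolding induces_ordered_def by auto
  qed
  ultimately show ?thesis
    unfolding bigraph_embedding_def bij_betw_def by auto
qed

lemma bigraph_free_imp_pair_restricted: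
  assumes "is_bigraph H A B k1 k2" "bigraph_free X (induced_edges E X) H A B"
    and "k_base k1 X \<A>" "k_base k2 X \<B>"
  shows "pair_restricted E k1 k2 \<A> \<B>"
proof -
  have "finite A" "finite B" "card A = k1" "card B = k2" "A \<inter> B = {}"
    using assms(1) unfolding is_bigraph_def by auto
  then obtain fa fb where fa: "bij_betw fa {..<k1} A" and fb: "bij_betw fb {..<k2} B"
    using ex_bij_betw_nat_finite by (metis atLeast0LessThan)
  have "\<not> pair_induces E k1 k2 (\<lambda>i j. H (fa i) (fb j)) \<A> \<B>"
  proof
    assume "pair_induces E k1 k2 (\<lambda>i j. H (fa i) (fb j)) \<A> \<B>"
    then obtain as bs where "as \<in> \<A>" "bs \<in> \<B>"
      and induces: "induces_ordered E k1 k2 (\<lambda>i j. H (fa i) (fb j)) as bs"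
      unfolding pair_induces_def by blast
    then have "distinct as" "length as = k1" "set as \<subseteq> X"
      and "distinct bs" "length bs = k2" "set bs \<subseteq> X"
      using assms(3,4) unfolding k_base_def by auto
    then show False
      using bigraph_embedding_induced[OF induces_ordered_imp_bigraph_embedding[OF fa fb
              \<open>A \<inter> B = {}\<close> _ _ _ _ induces]] assms(2)
      unfolding bigraph_free_def by blast
  qed
  then show ?thesis unfolding pair_restricted_def by blast
qed

theorem lemma3p10:
  fixes V :: "'a set" and E :: "'a \<Rightarrow> 'a \<Rightarrow> bool" and n k s :: nat
    and H :: "'b \<Rightarrow> 'b \<Rightarrow> bool" and A B :: "'b set" and X Y :: "'a set"
  assumes "is_graph V E" and "card V = n"
    and "0 < k" and "0 < s"
    and "is_bigraph H A B k k"
    and "X \<subseteq> V" and "Y \<subseteq> V"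
    and "bigraph_free X (induced_edges E X) H A B"
    and "ks_unrestricted V E k s Y"
  shows "min (card (X - Y)) (card (X \<inter> Y)) \<le> k * s"
proof (rule ccontr)
  assume "\<not> ?thesis"
  then have "k * s \<le> card (X \<inter> Y)" "k * s \<le> card (X - Y)" by auto
  moreover have "finite X" using assms(1,6) finite_subset unfolding is_graph_def by blast
  ultimately obtain \<A> \<B> where \<A>: "k_base k (X \<inter> Y) \<A>" "card \<A> = s"
    and \<B>: "k_base k (X - Y) \<B>" "card \<B> = s"
    using k_base_exists assms(3) by (metis finite_Diff finite_Int)
  have "pair_restricted E k k \<A> \<B>"
    using bigraph_free_imp_pair_restricted[OF assms(5,8)] k_base_mono \<A>(1) \<B>(1) by blast
  moreover have "k_base k Y \<A>" "k_base k (V - Y) \<B>"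
    using k_base_mono \<A>(1) \<B>(1) assms(6) by blast+
  ultimately show False
    using assms(9) \<A>(2) \<B>(2) unfolding ks_unrestricted_def ks_restricted_def by auto
qed

end
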